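(* Let $m,n,k\in\mathbb{N}$ and let $\mathrm{vec}:\mathbb{R}^{m\times n}\to\mathbb{R}^{mn}$ be column-major vectorization. Then for every $f\in ISD(\mathbb{R}^{mn},\mathbb{R}^k)$ there exists $\mathcal N\in MRNN(\mathbb{R}^{m\times n},\mathbb{R}^k)$ with $f=\mathcal N\circ\mathrm{vec}^{-1}$, and for every $\mathcal N\in MRNN(\mathbb{R}^{m\times n},\mathbb{R}^k)$ there exists $f\in ISD(\mathbb{R}^{mn},\mathbb{R}^k)$ with $\mathcal N=f\circ\mathrm{vec}$. Consequently $\mathcal N\mapsto \mathcal N\circ\mathrm{vec}^{-1}$ is a bijective ring homomorphism $MRNN(\mathbb{R}^{m\times n},\mathbb{R}^k)\to ISD(\mathbb{R}^{mn},\mathbb{R}^k)$ (pointwise operations).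
   Context: $ISD(\mathbb{R}^N,\mathbb{R}^k)$: maps whose components lie in the smallest set of functions $\mathbb{R}^N\to\mathbb{R}$ containing all real polynomials and closed under pointwise $\min$, $\max$. An $L$-layer matrix-recurrent neural network (MRNN) with input $X\in\mathbb{R}^{m\times n}$ computes $h_0=0\in\mathbb{R}^{d_0}$ and, for $\ell=1,\dots,L$, $h_\ell = b_{\ell,0} + A_{\ell,0}h_{\ell-1} + B_{\ell,0}(I\otimes X)h_{\ell-1} + \sigma\big(b_{\ell,1} + A_{\ell,1}h_{\ell-1} + B_{\ell,1}(I\otimes X)h_{\ell-1}\big)$, and outputs $h_L\in\mathbb{R}^k$; here $\sigma=\mathrm{ReLU}=\max(0,\cdot)$ componentwise, $I\otimes X$ is a Kronecker product with an identity matrix whose size may vary per layer (and per term) so that the products are defined, and $b_{\ell,i},A_{\ell,i},B_{\ell,i}$ are real vectors/matrices of compatible sizes (widths arbitrary). $MRNN(\mathbb{R}^{m\times n},\mathbb{R}^k)$ is the set of all functions computed by such networks for some $L\ge0$. *)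

theory Defs
  imports "Jordan_Normal_Form.Matrix" "HOL-Algebra.QuotRing"
begin

text \<open>Only their values on
  carrier_vec N matter.\<close>

inductive poly_fun :: "nat \<Rightarrow> (real vec \<Rightarrow> real) \<Rightarrow> bool" for N :: nat where
  pf_const: "poly_fun N (\<lambda>x. c)"
| pf_coord: "i < N \<Longrightarrow> poly_fun N (\<lambda>x. x $ i)"
| pf_add: "poly_fun N f \<Longrightarrow> poly_fun N g \<Longrightarrow> poly_fun N (\<lambda>x. f x + g x)"
| pf_mult: "poly_fun N f \<Longrightarrow> poly_fun N g \<Longrightarrow> poly_fun N (\<lambda>x. f x * g x)"

inductive isd_fun :: "nat \<Rightarrow> (real vec \<Rightarrow> real) \<Rightarrow> bool" for N :: nat where
  isd_poly: "poly_fun N f \<Longrightarrow> isd_fun N f"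
| isd_min: "isd_fun N f \<Longrightarrow> isd_fun N g \<Longrightarrow> isd_fun N (\<lambda>x. min (f x) (g x))"
| isd_max: "isd_fun N f \<Longrightarrow> isd_fun N g \<Longrightarrow> isd_fun N (\<lambda>x. max (f x) (g x))"

definition ISD :: "nat \<Rightarrow> nat \<Rightarrow> (real vec \<Rightarrow> real vec) set" where
  "ISD N k = {F. F \<in> extensional (carrier_vec N) \<and>
      (\<forall>x \<in> carrier_vec N. F x \<in> carrier_vec k) \<and>
      (\<forall>i < k. \<exists>f. isd_fun N f \<and> (\<forall>x \<in> carrier_vec N. F x $ i = f x))}"

text \<open>Kronecker product I_r \<otimes> X.\<close>

definition kron_id :: "nat \<Rightarrow> real mat \<Rightarrow> real mat" where
  "kron_id r X = mat (r * dim_row X) (r * dim_col X)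
     (\<lambda>(i, j). if i div dim_row X = j div dim_col X
               then X $$ (i mod dim_row X, j mod dim_col X) else 0)"

text \<open>One layer: (b0, A0, r0, B0, b1, A1, r1, B1), where r0, r1 are the sizes of the
  identity matrices in the Kronecker products of the two terms.\<close>

datatype layer = Layer
  (lb0: "real vec") (lA0: "real mat") (lr0: nat) (lB0: "real mat")
  (lb1: "real vec") (lA1: "real mat") (lr1: nat) (lB1: "real mat")

definition relu_vec :: "real vec \<Rightarrow> real vec" where
  "relu_vec v = map_vec (\<lambda>t. max 0 t) v"

definition layer_step :: "real mat \<Rightarrow> layer \<Rightarrow> real vec \<Rightarrow> real vec" where
  "layer_step X L h =
     lb0 L + lA0 L *\<^sub>v h + lB0 L *\<^sub>v (kron_id (lr0 L) X *\<^sub>v h)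
     + relu_vec (lb1 L + lA1 L *\<^sub>v h + lB1 L *\<^sub>v (kron_id (lr1 L) X *\<^sub>v h))"

text \<open>A Kronecker term whose product is not defined is allowed only
  with a zero coefficient matrix B (i.e. the term is absent).\<close>

definition layer_wf :: "nat \<Rightarrow> nat \<Rightarrow> nat \<Rightarrow> nat \<Rightarrow> layer \<Rightarrow> bool" where
  "layer_wf m n d d' L \<longleftrightarrow>
     lb0 L \<in> carrier_vec d' \<and> lA0 L \<in> carrier_mat d' d \<and>
     lB0 L \<in> carrier_mat d' (lr0 L * m) \<and> (lr0 L * n = d \<or> lB0 L = 0\<^sub>m d' (lr0 L * m)) \<and>
     lb1 L \<in> carrier_vec d' \<and> lA1 L \<in> carrier_mat d' d \<and>
     lB1 L \<in> carrier_mat d' (lr1 L * m) \<and> (lr1 L * n = d \<or> lB1 L = 0\<^sub>m d' (lr1 L * m))"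

definition net_wf :: "nat \<Rightarrow> nat \<Rightarrow> nat \<Rightarrow> nat list \<Rightarrow> layer list \<Rightarrow> bool" where
  "net_wf m n k ds Ls \<longleftrightarrow> length ds = Suc (length Ls) \<and> last ds = k \<and>
     (\<forall>l < length Ls. layer_wf m n (ds ! l) (ds ! Suc l) (Ls ! l))"

definition net_eval :: "nat list \<Rightarrow> layer list \<Rightarrow> real mat \<Rightarrow> real vec" where
  "net_eval ds Ls X = foldl (\<lambda>h L. layer_step X L h) (0\<^sub>v (hd ds)) Ls"

definition MRNN :: "nat \<Rightarrow> nat \<Rightarrow> nat \<Rightarrow> (real mat \<Rightarrow> real vec) set" where
  "MRNN m n k = {G. \<exists>ds Ls. net_wf m n k ds Ls \<and>
      G = restrict (net_eval ds Ls) (carrier_mat m n)}"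

definition vec_cm :: "nat \<Rightarrow> nat \<Rightarrow> real mat \<Rightarrow> real vec" where
  "vec_cm m n X = vec (m * n) (\<lambda>p. X $$ (p mod m, p div m))"

definition unvec_cm :: "nat \<Rightarrow> nat \<Rightarrow> real vec \<Rightarrow> real mat" where
  "unvec_cm m n v = mat m n (\<lambda>(i, j). v $ (j * m + i))"

definition fun_ring :: "'a set \<Rightarrow> nat \<Rightarrow> ('a \<Rightarrow> real vec) set \<Rightarrow> ('a \<Rightarrow> real vec) ring" where
  "fun_ring D k S = \<lparr>carrier = S,
     mult = (\<lambda>F G. restrict (\<lambda>x. vec k (\<lambda>i. F x $ i * G x $ i)) D),
     one = restrict (\<lambda>x. vec k (\<lambda>i. 1)) D,
     zero = restrict (\<lambda>x. vec k (\<lambda>i. 0)) D,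
     add = (\<lambda>F G. restrict (\<lambda>x. vec k (\<lambda>i. F x $ i + G x $ i)) D)\<rparr>"

definition MRNN_ring :: "nat \<Rightarrow> nat \<Rightarrow> nat \<Rightarrow> (real mat \<Rightarrow> real vec) ring" where
  "MRNN_ring m n k = fun_ring (carrier_mat m n) k (MRNN m n k)"

definition ISD_ring :: "nat \<Rightarrow> nat \<Rightarrow> (real vec \<Rightarrow> real vec) ring" where
  "ISD_ring N k = fun_ring (carrier_vec N) k (ISD N k)"

end

theory Submission
  imports Defs
begin

text \<open>ISD functions are closed under sums and products, because min and max commute with
  adding a polynomial and, after the splitting of a factor into positive and negative parts,
  with multiplication.  Networks compute ISD functions of vec X: every layer only adds,
  multiplies by constant matrices or by entries of X, and applies max 0.  Conversely a
  network can build every polynomial, multiplying by one entry of X per layer, and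
  the ReLU term of a layer yields min and max; networks of equal depth run in parallel through
  block-diagonal layers.\<close>

section \<open>Closure properties of ISD functions\<close>

text \<open>Since p^2 + 1 dominates p, the correction terms choose the right branch whatever the
  sign of p; so p * min a b needs only min and max of polynomial multiples of a and b.\<close>

lemma mult_min_eq_max_min:
  fixes a b p :: real
  shows "p * min a b = max (min (p*a) (p*a + (p^2+1)*(b-a))) (min (p*b) (p*b + (p^2+1)*(a-b)))"
proof -
  have "p^2 + 1 - p = (p - 1/2)^2 + 3/4" by (simp add: power2_eq_square algebra_simps)
  then have dom: "p^2 + 1 - p > 0" by (simp add: add_nonneg_pos)
  have pos: "p^2 + 1 > 0" by (simp add: add_nonneg_pos)
  show ?thesis
  proof (cases "a \<le> b")
    case True
    have "(p^2+1 - p)*(b-a) \<ge> 0" using True dom by simp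
    then have "p*b + (p^2+1)*(a-b) \<le> p*a" by (simp add: algebra_simps)
    moreover have "(p^2+1)*(b-a) \<ge> 0" using True pos by simp
    ultimately show ?thesis using True by (simp add: min_absorb1)
  next
    case False
    have "(p^2+1 - p)*(a-b) \<ge> 0" using False dom by simp
    then have "p*a + (p^2+1)*(b-a) \<le> p*b" by (simp add: algebra_simps)
    moreover have "(p^2+1)*(a-b) \<ge> 0" using False pos by simp
    ultimately show ?thesis using False by (simp add: min_absorb2)
  qed
qed

lemma isd_fun_const: "isd_fun N (\<lambda>x. c)"
  by (intro isd_poly pf_const)

lemma poly_fun_scale: "poly_fun N f \<Longrightarrow> poly_fun N (\<lambda>x. c * f x)"
  using pf_mult[OF pf_const] by blast

lemma isd_fun_uminus: "isd_fun N f \<Longrightarrow> isd_fun N (\<lambda>x. - f x)"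
proof (induction rule: isd_fun.induct)
  case (isd_poly f)
  then show ?case using poly_fun_scale[OF isd_poly, of "-1"] isd_fun.isd_poly by simp
next
  case (isd_min f g)
  have "(\<lambda>x. - min (f x) (g x)) = (\<lambda>x. max (- f x) (- g x))" by auto
  then show ?case using isd_fun.isd_max[OF isd_min.IH] by simp
next
  case (isd_max f g)
  have "(\<lambda>x. - max (f x) (g x)) = (\<lambda>x. min (- f x) (- g x))" by auto
  then show ?case using isd_fun.isd_min[OF isd_max.IH] by simp
qed

lemma isd_fun_add_poly: "isd_fun N g \<Longrightarrow> poly_fun N p \<Longrightarrow> isd_fun N (\<lambda>x. p x + g x)"
proof (induction rule: isd_fun.induct)
  case (isd_poly f)
  then show ?case by (intro isd_fun.isd_poly pf_add)
next
  case (isd_min f g)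
  have "(\<lambda>x. p x + min (f x) (g x)) = (\<lambda>x. min (p x + f x) (p x + g x))" by auto
  then show ?case using isd_min by (simp add: isd_fun.isd_min)
next
  case (isd_max f g)
  have "(\<lambda>x. p x + max (f x) (g x)) = (\<lambda>x. max (p x + f x) (p x + g x))" by auto
  then show ?case using isd_max by (simp add: isd_fun.isd_max)
qed

lemma isd_fun_add: "isd_fun N f \<Longrightarrow> isd_fun N g \<Longrightarrow> isd_fun N (\<lambda>x. f x + g x)"
proof (induction arbitrary: g rule: isd_fun.induct)
  case (isd_poly f)
  then show ?case using isd_fun_add_poly by blast
next
  case (isd_min f h)
  have "(\<lambda>x. min (f x) (h x) + g x) = (\<lambda>x. min (f x + g x) (h x + g x))" by auto
  then show ?case using isd_min by (simp add: isd_fun.isd_min)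
next
  case (isd_max f h)
  have "(\<lambda>x. max (f x) (h x) + g x) = (\<lambda>x. max (f x + g x) (h x + g x))" by auto
  then show ?case using isd_max by (simp add: isd_fun.isd_max)
qed

lemma isd_fun_diff: "isd_fun N f \<Longrightarrow> isd_fun N g \<Longrightarrow> isd_fun N (\<lambda>x. f x - g x)"
  using isd_fun_add[OF _ isd_fun_uminus] by (simp only: diff_conv_add_uminus)

lemma isd_fun_poly_mult_min:
  assumes G: "\<And>p. poly_fun N p \<Longrightarrow> isd_fun N (\<lambda>x. p x * G x)"
    and H: "\<And>p. poly_fun N p \<Longrightarrow> isd_fun N (\<lambda>x. p x * H x)"
    and p: "poly_fun N p"
  shows "isd_fun N (\<lambda>x. p x * min (G x) (H x))"
proof -
  let ?q = "\<lambda>x. (p x)^2 + 1"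
  have q: "poly_fun N ?q" unfolding power2_eq_square by (intro pf_add pf_mult p pf_const)
  have pG: "isd_fun N (\<lambda>x. p x * G x)" and pH: "isd_fun N (\<lambda>x. p x * H x)"
    and qG: "isd_fun N (\<lambda>x. ?q x * G x)" and qH: "isd_fun N (\<lambda>x. ?q x * H x)"
    using G H p q by auto
  have "(\<lambda>x. p x * min (G x) (H x)) = (\<lambda>x.
      max (min (p x * G x) (p x * G x + (?q x * H x - ?q x * G x)))
          (min (p x * H x) (p x * H x + (?q x * G x - ?q x * H x))))"
    by (rule ext, subst mult_min_eq_max_min, simp add: algebra_simps)
  then show ?thesis
    by (simp only:) (intro isd_fun.isd_max isd_fun.isd_min isd_fun_add isd_fun_diff pG pH qG qH)
qed

lemma isd_fun_poly_mult: "isd_fun N F \<Longrightarrow> poly_fun N p \<Longrightarrow> isd_fun N (\<lambda>x. p x * F x)"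
proof (induction arbitrary: p rule: isd_fun.induct)
  case (isd_poly f)
  then show ?case by (intro isd_fun.isd_poly pf_mult)
next
  case (isd_min f g)
  then show ?case using isd_fun_poly_mult_min by blast
next
  case (isd_max f g)
  have "(\<lambda>x. p x * max (f x) (g x)) = (\<lambda>x. (p x * f x + p x * g x) - p x * min (f x) (g x))"
    by (rule ext) (simp add: max_def min_def algebra_simps)
  then show ?case using isd_max isd_fun_poly_mult_min by (simp add: isd_fun_add isd_fun_diff)
qed

lemma isd_fun_scale: "isd_fun N F \<Longrightarrow> isd_fun N (\<lambda>x. c * F x)"
  using isd_fun_poly_mult[OF _ pf_const] by blast

lemma isd_fun_pos_part: "isd_fun N f \<Longrightarrow> isd_fun N (\<lambda>x. max (f x) 0)"
  using isd_fun.isd_max isd_fun_const by blast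

text \<open>For K \<ge> 0 the product distributes over min and max; a general factor is the difference
  of its positive and negative parts.\<close>

lemma isd_fun_mult_lattice:
  assumes distrib: "\<And>a b c :: real. c \<ge> 0 \<Longrightarrow> h a b * c = h (a * c) (b * c)"
    and closed: "\<And>f g. isd_fun N f \<Longrightarrow> isd_fun N g \<Longrightarrow> isd_fun N (\<lambda>x. h (f x) (g x))"
    and f: "\<And>K. isd_fun N K \<Longrightarrow> isd_fun N (\<lambda>x. f x * K x)"
    and g: "\<And>K. isd_fun N K \<Longrightarrow> isd_fun N (\<lambda>x. g x * K x)"
    and K: "isd_fun N K"
  shows "isd_fun N (\<lambda>x. h (f x) (g x) * K x)"
proof -
  let ?Kp = "\<lambda>x. max (K x) 0" and ?Kn = "\<lambda>x. max (- K x) 0"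
  have Kp: "isd_fun N ?Kp" and Kn: "isd_fun N ?Kn"
    using K by (simp_all add: isd_fun_pos_part isd_fun_uminus)
  have "h (f x) (g x) * K x = h (f x * ?Kp x) (g x * ?Kp x) - h (f x * ?Kn x) (g x * ?Kn x)" for x
  proof -
    have "h (f x) (g x) * K x = h (f x) (g x) * ?Kp x - h (f x) (g x) * ?Kn x"
      by (simp add: max_def algebra_simps)
    then show ?thesis by (simp add: distrib)
  qed
  then show ?thesis by (simp only:) (intro isd_fun_diff closed f g Kp Kn)
qed

lemma isd_fun_mult: "isd_fun N F \<Longrightarrow> isd_fun N K \<Longrightarrow> isd_fun N (\<lambda>x. F x * K x)"
proof (induction arbitrary: K rule: isd_fun.induct)
  case (isd_poly f)
  then show ?case using isd_fun_poly_mult by blast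
next
  case (isd_min f g)
  then show ?case
    by (intro isd_fun_mult_lattice[where h = min]) (simp_all add: min_mult_distrib_right isd_fun.isd_min)
next
  case (isd_max f g)
  then show ?case
    by (intro isd_fun_mult_lattice[where h = max]) (simp_all add: max_mult_distrib_right isd_fun.isd_max)
qed

lemma isd_fun_sum:
  "finite A \<Longrightarrow> (\<And>j. j \<in> A \<Longrightarrow> isd_fun N (f j)) \<Longrightarrow> isd_fun N (\<lambda>x. \<Sum>j\<in>A. f j x)"
  by (induction rule: finite_induct) (simp_all add: isd_fun_const isd_fun_add)


lemma col_major_index_less: "(a::nat) < m \<Longrightarrow> b < n \<Longrightarrow> b*m + a < m*n"
proof -
  assume "a < m" "b < n"
  then have "b*m + a < (b+1)*m" by simp
  also have "\<dots> \<le> n*m" using \<open>b < n\<close> by (intro mult_right_mono) auto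
  finally show ?thesis by (simp add: mult.commute)
qed

lemma vec_cm_carrier: "vec_cm m n X \<in> carrier_vec (m*n)"
  unfolding vec_cm_def by auto

lemma unvec_cm_carrier: "unvec_cm m n v \<in> carrier_mat m n"
  unfolding unvec_cm_def by auto

lemma vec_cm_index: "a < m \<Longrightarrow> b < n \<Longrightarrow> vec_cm m n X $ (b*m + a) = X $$ (a, b)"
  using col_major_index_less[of a m b n] by (simp add: vec_cm_def)

lemma unvec_cm_vec_cm: "X \<in> carrier_mat m n \<Longrightarrow> unvec_cm m n (vec_cm m n X) = X"
  by (intro eq_matI) (auto simp: unvec_cm_def vec_cm_index col_major_index_less)

lemma vec_cm_unvec_cm: "v \<in> carrier_vec (m*n) \<Longrightarrow> vec_cm m n (unvec_cm m n v) = v"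
proof (rule eq_vecI)
  fix p assume v: "v \<in> carrier_vec (m*n)" and "p < dim_vec v"
  then have p: "p < m*n" by simp
  then have "0 < m" by (cases m) auto
  then have "p mod m < m" "p div m < n"
    using p by (auto simp: less_mult_imp_div_less mult.commute)
  then show "vec_cm m n (unvec_cm m n v) $ p = v $ p"
    using p by (simp add: vec_cm_def unvec_cm_def)
qed (simp add: vec_cm_def)

section \<open>From networks to ISD functions\<close>

lemma mult_mat_vec_nth:
  "A \<in> carrier_mat d' d \<Longrightarrow> dim_vec v = d \<Longrightarrow> i < d' \<Longrightarrow> (A *\<^sub>v v) $ i = (\<Sum>j<d. A $$ (i,j) * v $ j)"
  by (auto simp: scalar_prod_def atLeast0LessThan intro!: sum.cong)

lemma kron_id_carrier: "X \<in> carrier_mat m n \<Longrightarrow> kron_id r X \<in> carrier_mat (r*m) (r*n)"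
  by (auto simp: kron_id_def)

lemma dim_kron_id [simp]:
  "dim_row (kron_id r X) = r * dim_row X" "dim_col (kron_id r X) = r * dim_col X"
  by (auto simp: kron_id_def)

lemma kron_id_index: "X \<in> carrier_mat m n \<Longrightarrow> i < r*m \<Longrightarrow> j < r*n \<Longrightarrow>
   kron_id r X $$ (i,j) = (if i div m = j div n then X $$ (i mod m, j mod n) else 0)"
  by (auto simp: kron_id_def)

lemma zero_mat_mult_vec: "dim_vec w = c \<Longrightarrow> 0\<^sub>m d c *\<^sub>v w = 0\<^sub>v d"
  by (intro eq_vecI) (auto simp: scalar_prod_def)

definition isd_of_vec :: "nat \<Rightarrow> nat \<Rightarrow> nat \<Rightarrow> (real mat \<Rightarrow> real vec) \<Rightarrow> bool" where
  "isd_of_vec m n d H \<longleftrightarrow> (\<forall>X\<in>carrier_mat m n. dim_vec (H X) = d) \<and>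
     (\<exists>fs. (\<forall>i<d. isd_fun (m*n) (fs i)) \<and>
       (\<forall>i<d. \<forall>X\<in>carrier_mat m n. H X $ i = fs i (vec_cm m n X)))"

lemma isd_of_vecI:
  assumes "\<And>X. X \<in> carrier_mat m n \<Longrightarrow> dim_vec (H X) = d"
    and "\<And>i. i < d \<Longrightarrow> isd_fun (m*n) (fs i)"
    and "\<And>i X. i < d \<Longrightarrow> X \<in> carrier_mat m n \<Longrightarrow> H X $ i = fs i (vec_cm m n X)"
  shows "isd_of_vec m n d H"
  using assms unfolding isd_of_vec_def by blast

lemma isd_of_vecE:
  assumes "isd_of_vec m n d H"
  obtains fs where "\<And>X. X \<in> carrier_mat m n \<Longrightarrow> dim_vec (H X) = d"
    and "\<And>i. i < d \<Longrightarrow> isd_fun (m*n) (fs i)"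
    and "\<And>i X. i < d \<Longrightarrow> X \<in> carrier_mat m n \<Longrightarrow> H X $ i = fs i (vec_cm m n X)"
  using assms unfolding isd_of_vec_def by blast

lemma isd_of_vec_const: "dim_vec c = d \<Longrightarrow> isd_of_vec m n d (\<lambda>X. c)"
  by (rule isd_of_vecI[where fs = "\<lambda>i x. c $ i"]) (simp_all add: isd_fun_const)

lemma isd_of_vec_add:
  assumes "isd_of_vec m n d H1" and "isd_of_vec m n d H2"
  shows "isd_of_vec m n d (\<lambda>X. H1 X + H2 X)"
proof -
  obtain f1 where f1: "\<And>X. X \<in> carrier_mat m n \<Longrightarrow> dim_vec (H1 X) = d"
      "\<And>i. i < d \<Longrightarrow> isd_fun (m*n) (f1 i)"
      "\<And>i X. i < d \<Longrightarrow> X \<in> carrier_mat m n \<Longrightarrow> H1 X $ i = f1 i (vec_cm m n X)"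
    using assms(1) by (rule isd_of_vecE) blast
  obtain f2 where f2: "\<And>X. X \<in> carrier_mat m n \<Longrightarrow> dim_vec (H2 X) = d"
      "\<And>i. i < d \<Longrightarrow> isd_fun (m*n) (f2 i)"
      "\<And>i X. i < d \<Longrightarrow> X \<in> carrier_mat m n \<Longrightarrow> H2 X $ i = f2 i (vec_cm m n X)"
    using assms(2) by (rule isd_of_vecE) blast
  show ?thesis
    by (rule isd_of_vecI[where fs = "\<lambda>i x. f1 i x + f2 i x"]) (simp_all add: f1 f2 isd_fun_add)
qed

lemma isd_of_vec_relu:
  assumes "isd_of_vec m n d H"
  shows "isd_of_vec m n d (\<lambda>X. relu_vec (H X))"
proof -
  obtain f where f: "\<And>X. X \<in> carrier_mat m n \<Longrightarrow> dim_vec (H X) = d"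
      "\<And>i. i < d \<Longrightarrow> isd_fun (m*n) (f i)"
      "\<And>i X. i < d \<Longrightarrow> X \<in> carrier_mat m n \<Longrightarrow> H X $ i = f i (vec_cm m n X)"
    using assms by (rule isd_of_vecE) blast
  show ?thesis
    by (rule isd_of_vecI[where fs = "\<lambda>i x. max 0 (f i x)"])
      (simp_all add: f relu_vec_def isd_fun.isd_max isd_fun_const)
qed

lemma isd_of_vec_mult_mat:
  assumes "isd_of_vec m n d H" and A: "A \<in> carrier_mat d' d"
  shows "isd_of_vec m n d' (\<lambda>X. A *\<^sub>v H X)"
proof -
  obtain f where f: "\<And>X. X \<in> carrier_mat m n \<Longrightarrow> dim_vec (H X) = d"
      "\<And>i. i < d \<Longrightarrow> isd_fun (m*n) (f i)"
      "\<And>i X. i < d \<Longrightarrow> X \<in> carrier_mat m n \<Longrightarrow> H X $ i = f i (vec_cm m n X)"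
    using assms(1) by (rule isd_of_vecE) blast
  show ?thesis
  proof (rule isd_of_vecI[where fs = "\<lambda>i x. \<Sum>j<d. A $$ (i,j) * f j x"])
    show "isd_fun (m*n) (\<lambda>x. \<Sum>j<d. A $$ (i,j) * f j x)" for i
      by (intro isd_fun_sum isd_fun_scale f) auto
    show "(A *\<^sub>v H X) $ i = (\<Sum>j<d. A $$ (i,j) * f j (vec_cm m n X))"
      if "i < d'" "X \<in> carrier_mat m n" for i X
      using that mult_mat_vec_nth[OF A f(1)] f(3) by simp
  qed (use A in simp)
qed

lemma isd_of_vec_kron:
  assumes "isd_of_vec m n d H" and r: "r * n = d"
  shows "isd_of_vec m n (r*m) (\<lambda>X. kron_id r X *\<^sub>v H X)"
proof -
  obtain f where f: "\<And>X. X \<in> carrier_mat m n \<Longrightarrow> dim_vec (H X) = d"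
      "\<And>i. i < d \<Longrightarrow> isd_fun (m*n) (f i)"
      "\<And>i X. i < d \<Longrightarrow> X \<in> carrier_mat m n \<Longrightarrow> H X $ i = f i (vec_cm m n X)"
    using assms(1) by (rule isd_of_vecE) blast
  define g where "g p x = (\<Sum>j<d. (if p div m = j div n then x $ ((j mod n)*m + p mod m) else 0) * f j x)"
    for p x
  have pos: "0 < m" "0 < n" if "p < r*m" "j < d" for p j
    using that r by (auto intro!: Nat.gr0I)
  show ?thesis
  proof (rule isd_of_vecI[where fs = g])
    fix p assume p: "p < r*m"
    show "isd_fun (m*n) (g p)"
      unfolding g_def
    proof (rule isd_fun_sum)
      fix j assume "j \<in> {..<d}"
      then have "(j mod n)*m + p mod m < m*n" using pos[OF p] by (intro col_major_index_less) auto
      then show "isd_fun (m*n) (\<lambda>x. (if p div m = j div n then x $ ((j mod n)*m + p mod m) else 0) * f j x)"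
        using isd_fun_poly_mult[OF f(2) pf_coord] \<open>j \<in> {..<d}\<close>
        by (cases "p div m = j div n") (simp_all add: isd_fun_const)
    qed simp
    fix X :: "real mat" assume X: "X \<in> carrier_mat m n"
    have "(kron_id r X *\<^sub>v H X) $ p = (\<Sum>j<d. kron_id r X $$ (p,j) * H X $ j)"
      using kron_id_carrier[OF X, of r] r f(1)[OF X] p by (intro mult_mat_vec_nth) auto
    also have "\<dots> = g p (vec_cm m n X)"
      unfolding g_def using X p r pos[OF p]
      by (intro sum.cong) (auto simp: kron_id_index f(3) vec_cm_index)
    finally show "(kron_id r X *\<^sub>v H X) $ p = g p (vec_cm m n X)" .
  qed (use kron_id_carrier in auto)
qed

lemma isd_of_vec_kron_term:
  assumes H: "isd_of_vec m n d H" and B: "B \<in> carrier_mat d' (r*m)"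
    and "r * n = d \<or> B = 0\<^sub>m d' (r*m)"
  shows "isd_of_vec m n d' (\<lambda>X. B *\<^sub>v (kron_id r X *\<^sub>v H X))"
proof (cases "r * n = d")
  case True
  then show ?thesis using isd_of_vec_mult_mat[OF isd_of_vec_kron[OF H True] B] by simp
next
  case False
  then have "B = 0\<^sub>m d' (r*m)" using assms(3) by simp
  then have "isd_of_vec m n d' (\<lambda>X. 0\<^sub>v d') = isd_of_vec m n d' (\<lambda>X. B *\<^sub>v (kron_id r X *\<^sub>v H X))"
    unfolding isd_of_vec_def by (auto simp: zero_mat_mult_vec)
  then show ?thesis using isd_of_vec_const[of "0\<^sub>v d'"] by simp
qed

lemma isd_of_vec_layer_step:
  assumes "isd_of_vec m n d H" and "layer_wf m n d d' L"
  shows "isd_of_vec m n d' (\<lambda>X. layer_step X L (H X))"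
  using assms unfolding layer_step_def layer_wf_def
  by (intro isd_of_vec_add isd_of_vec_relu isd_of_vec_const isd_of_vec_mult_mat isd_of_vec_kron_term)
    auto

lemma isd_of_vec_foldl:
  assumes "isd_of_vec m n (hd ds) H" "length ds = Suc (length Ls)"
    "\<forall>l < length Ls. layer_wf m n (ds ! l) (ds ! Suc l) (Ls ! l)"
  shows "isd_of_vec m n (last ds) (\<lambda>X. foldl (\<lambda>h L. layer_step X L h) (H X) Ls)"
  using assms
proof (induction Ls arbitrary: ds H)
  case Nil
  then show ?case by (cases ds) auto
next
  case (Cons L Ls)
  obtain d ds' where ds: "ds = d # ds'" using Cons.prems(2) by (cases ds) auto
  with Cons.prems(2) have "ds' \<noteq> []" by auto
  then have "layer_wf m n d (hd ds') L"
    using Cons.prems(3) ds by (auto simp: hd_conv_nth)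
  then have "isd_of_vec m n (hd ds') (\<lambda>X. layer_step X L (H X))"
    using isd_of_vec_layer_step Cons.prems(1) ds by simp
  moreover have "\<forall>l < length Ls. layer_wf m n (ds' ! l) (ds' ! Suc l) (Ls ! l)"
    using Cons.prems(3) ds by auto
  ultimately show ?case
    using Cons.IH[of ds'] Cons.prems(2) ds \<open>ds' \<noteq> []\<close> by auto
qed

lemma MRNN_eq_ISD_comp_vec_cm:
  assumes "N \<in> MRNN m n k"
  shows "\<exists>f \<in> ISD (m * n) k. N = restrict (f \<circ> vec_cm m n) (carrier_mat m n)"
proof -
  obtain ds Ls where wf: "net_wf m n k ds Ls" and N: "N = restrict (net_eval ds Ls) (carrier_mat m n)"
    using assms unfolding MRNN_def by auto
  have "isd_of_vec m n k (net_eval ds Ls)"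
    using isd_of_vec_foldl[OF isd_of_vec_const] wf unfolding net_wf_def net_eval_def by auto
  then obtain fs where dim: "\<And>X. X \<in> carrier_mat m n \<Longrightarrow> dim_vec (net_eval ds Ls X) = k"
      and isd: "\<And>i. i < k \<Longrightarrow> isd_fun (m*n) (fs i)"
      and eq: "\<And>i X. i < k \<Longrightarrow> X \<in> carrier_mat m n \<Longrightarrow> net_eval ds Ls X $ i = fs i (vec_cm m n X)"
    by (rule isd_of_vecE) blast
  let ?f = "restrict (\<lambda>v. vec k (\<lambda>i. fs i v)) (carrier_vec (m*n))"
  have "?f \<in> ISD (m*n) k" unfolding ISD_def using isd by auto
  moreover have "N = restrict (?f \<circ> vec_cm m n) (carrier_mat m n)"
    unfolding N using vec_cm_carrier dim eq by (intro restrict_ext eq_vecI) auto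
  ultimately show ?thesis by blast
qed


text \<open>In a synchronized network every Kronecker term acts on the whole state
  (lr * n equals the width), so networks of equal depth can be run side by side
  through block-diagonal layers.\<close>

definition sync_net :: "nat \<Rightarrow> nat \<Rightarrow> nat list \<Rightarrow> layer list \<Rightarrow> bool" where
  "sync_net m n ds Ls \<longleftrightarrow> length ds = Suc (length Ls) \<and>
     (\<forall>l<length Ls. layer_wf m n (ds!l) (ds!Suc l) (Ls!l) \<and>
        lr0 (Ls!l) * n = ds!l \<and> lr1 (Ls!l) * n = ds!l)"

definition sync_computes :: "nat \<Rightarrow> nat \<Rightarrow> nat \<Rightarrow> nat \<Rightarrow> (real mat \<Rightarrow> real vec) \<Rightarrow> bool" where
  "sync_computes m n len d G \<longleftrightarrow> (\<exists>ds Ls. sync_net m n ds Ls \<and> length Ls = len \<and>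
     hd ds = 0 \<and> last ds = d \<and> (\<forall>X\<in>carrier_mat m n. net_eval ds Ls X = G X))"

definition sync_computable :: "nat \<Rightarrow> nat \<Rightarrow> nat \<Rightarrow> (real mat \<Rightarrow> real vec) \<Rightarrow> bool" where
  "sync_computable m n d G \<longleftrightarrow> (\<exists>len. sync_computes m n len d G)"

lemma sync_net_Cons:
  "sync_net m n (d # ds) (L # Ls) \<longleftrightarrow>
     layer_wf m n d (hd ds) L \<and> lr0 L * n = d \<and> lr1 L * n = d \<and> sync_net m n ds Ls"
  by (cases ds) (auto simp: sync_net_def All_less_Suc2)

lemma sync_net_snoc:
  assumes "sync_net m n ds Ls" "layer_wf m n (last ds) d' L" "lr0 L * n = last ds" "lr1 L * n = last ds"
  shows "sync_net m n (ds @ [d']) (Ls @ [L])"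
  using assms
proof (induction Ls arbitrary: ds)
  case Nil
  then obtain d where "ds = [d]" by (auto simp: sync_net_def length_Suc_conv)
  then show ?case using Nil.prems by (simp add: sync_net_Cons sync_net_def)
next
  case (Cons L' Ls)
  obtain d ds' where ds: "ds = d # ds'" using Cons.prems(1) by (cases ds) (auto simp: sync_net_def)
  with Cons.prems(1) have "ds' \<noteq> []" by (auto simp: sync_net_def)
  then show ?case using Cons ds by (auto simp: sync_net_Cons)
qed

lemma sync_computable_MRNN:
  assumes "sync_computable m n k G"
  shows "restrict G (carrier_mat m n) \<in> MRNN m n k"
proof -
  obtain ds Ls where net: "sync_net m n ds Ls" and last: "last ds = k"
    and ev: "\<forall>X\<in>carrier_mat m n. net_eval ds Ls X = G X"
    using assms unfolding sync_computable_def sync_computes_def by blast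
  have "net_wf m n k ds Ls" using net last by (auto simp: net_wf_def sync_net_def)
  moreover have "restrict G (carrier_mat m n) = restrict (net_eval ds Ls) (carrier_mat m n)"
    using ev by (intro restrict_ext) simp
  ultimately show ?thesis unfolding MRNN_def by blast
qed

lemma sync_computable_cong:
  "sync_computable m n d G \<Longrightarrow> (\<And>X. X \<in> carrier_mat m n \<Longrightarrow> G X = G' X) \<Longrightarrow> sync_computable m n d G'"
  unfolding sync_computable_def sync_computes_def by auto

definition const_layer :: "nat \<Rightarrow> real vec \<Rightarrow> layer" where
  "const_layer d c = Layer c (0\<^sub>m d 0) 0 (0\<^sub>m d 0) (0\<^sub>v d) (0\<^sub>m d 0) 0 (0\<^sub>m d 0)"

lemma lr_const_layer [simp]: "lr0 (const_layer d c) = 0" "lr1 (const_layer d c) = 0"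
  by (simp_all add: const_layer_def)

lemma layer_wf_const_layer: "c \<in> carrier_vec d \<Longrightarrow> layer_wf m n 0 d (const_layer d c)"
  unfolding layer_wf_def const_layer_def by auto

lemma layer_step_const_layer:
  "c \<in> carrier_vec d \<Longrightarrow> dim_vec h = 0 \<Longrightarrow> layer_step X (const_layer d c) h = c"
  unfolding layer_step_def const_layer_def relu_vec_def
  by (intro eq_vecI) (auto simp: scalar_prod_def)

lemma sync_computes_const: "c \<in> carrier_vec d \<Longrightarrow> sync_computes m n 1 d (\<lambda>X. c)"
  unfolding sync_computes_def
  by (intro exI[of _ "[0, d]"] exI[of _ "[const_layer d c]"])
    (auto simp: sync_net_def net_eval_def layer_wf_const_layer layer_step_const_layer)

lemma sync_computable_const: "c \<in> carrier_vec d \<Longrightarrow> sync_computable m n d (\<lambda>X. c)"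
  unfolding sync_computable_def using sync_computes_const by blast

lemma MRNN_const: "c \<in> carrier_vec d \<Longrightarrow> restrict (\<lambda>X. c) (carrier_mat m n) \<in> MRNN m n d"
  by (intro sync_computable_MRNN sync_computable_const)

lemma sync_computes_Suc: "sync_computes m n len d G \<Longrightarrow> sync_computes m n (Suc len) d G"
proof -
  let ?L = "const_layer 0 (0\<^sub>v 0)"
  assume "sync_computes m n len d G"
  then obtain ds Ls where net: "sync_net m n ds Ls" and len: "length Ls = len" and hd: "hd ds = 0"
    and last: "last ds = d" and ev: "\<forall>X\<in>carrier_mat m n. net_eval ds Ls X = G X"
    unfolding sync_computes_def by blast
  have "ds \<noteq> []" using net by (auto simp: sync_net_def)
  have "sync_net m n (0 # ds) (?L # Ls)"
    using net hd by (simp add: sync_net_Cons layer_wf_const_layer)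
  moreover have "net_eval (0 # ds) (?L # Ls) X = net_eval ds Ls X" for X
    using hd by (simp add: net_eval_def layer_step_const_layer)
  ultimately show ?thesis
    unfolding sync_computes_def using len last ev \<open>ds \<noteq> []\<close>
    by (intro exI[of _ "0 # ds"] exI[of _ "?L # Ls"]) auto
qed

lemma sync_computes_mono:
  assumes "sync_computes m n len d G" "len \<le> len'"
  shows "sync_computes m n len' d G"
  using assms(2) by (induction rule: dec_induct) (auto intro: assms(1) sync_computes_Suc)

lemma sync_computes_layer:
  assumes "sync_computes m n len d G" "layer_wf m n d d' L" "lr0 L * n = d" "lr1 L * n = d"
  shows "sync_computes m n (Suc len) d' (\<lambda>X. layer_step X L (G X))"
proof -
  obtain ds Ls where net: "sync_net m n ds Ls" and len: "length Ls = len" and hd: "hd ds = 0"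
    and last: "last ds = d" and ev: "\<forall>X\<in>carrier_mat m n. net_eval ds Ls X = G X"
    using assms(1) unfolding sync_computes_def by blast
  have "ds \<noteq> []" using net by (auto simp: sync_net_def)
  then have "net_eval (ds @ [d']) (Ls @ [L]) X = layer_step X L (net_eval ds Ls X)" for X
    by (simp add: net_eval_def)
  then show ?thesis
    unfolding sync_computes_def using sync_net_snoc[OF net] assms(2-4) len hd last ev \<open>ds \<noteq> []\<close>
    by (intro exI[of _ "ds @ [d']"] exI[of _ "Ls @ [L]"]) auto
qed

lemma sync_computable_layer:
  "sync_computable m n d G \<Longrightarrow> layer_wf m n d d' L \<Longrightarrow> lr0 L * n = d \<Longrightarrow> lr1 L * n = d \<Longrightarrow>
   sync_computable m n d' (\<lambda>X. layer_step X L (G X))"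
  unfolding sync_computable_def using sync_computes_layer by blast

section \<open>Parallel composition\<close>

definition block_diag :: "real mat \<Rightarrow> real mat \<Rightarrow> real mat" where
  "block_diag A B = four_block_mat A (0\<^sub>m (dim_row A) (dim_col B)) (0\<^sub>m (dim_row B) (dim_col A)) B"

lemma block_diag_carrier:
  "A \<in> carrier_mat a1 a2 \<Longrightarrow> B \<in> carrier_mat b1 b2 \<Longrightarrow> block_diag A B \<in> carrier_mat (a1+b1) (a2+b2)"
  unfolding block_diag_def by auto

lemma block_diag_mult_append:
  assumes "A \<in> carrier_mat a1 a2" "B \<in> carrier_mat b1 b2" "u \<in> carrier_vec a2" "v \<in> carrier_vec b2"
  shows "block_diag A B *\<^sub>v (u @\<^sub>v v) = (A *\<^sub>v u) @\<^sub>v (B *\<^sub>v v)"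
  using four_block_mat_mult_vec[OF assms(1) _ _ assms(2-4), of "0\<^sub>m a1 b2" "0\<^sub>m b1 a2"] assms
  unfolding block_diag_def by (simp add: zero_mat_mult_vec)

lemma kron_id_add:
  assumes X: "X \<in> carrier_mat m n" and m: "0 < m" and n: "0 < n"
  shows "kron_id (r1+r2) X = block_diag (kron_id r1 X) (kron_id r2 X)"
proof (rule eq_matI)
  fix i j assume "i < dim_row (block_diag (kron_id r1 X) (kron_id r2 X))"
    and "j < dim_col (block_diag (kron_id r1 X) (kron_id r2 X))"
  then have i: "i < r1*m + r2*m" and j: "j < r1*n + r2*n"
    using X by (simp_all add: block_diag_def)
  have lhs: "kron_id (r1 + r2) X $$ (i, j) = (if i div m = j div n then X $$ (i mod m, j mod n) else 0)"
    using i j X by (intro kron_id_index) (auto simp: algebra_simps)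
  consider "i < r1*m" "j < r1*n" | "i < r1*m" "\<not> j < r1*n" | "\<not> i < r1*m" "j < r1*n"
    | "\<not> i < r1*m" "\<not> j < r1*n" by blast
  then show "kron_id (r1 + r2) X $$ (i, j) = block_diag (kron_id r1 X) (kron_id r2 X) $$ (i, j)"
  proof cases
    case 1
    then show ?thesis using X i j lhs by (simp add: block_diag_def kron_id_index)
  next
    case 2
    then have "i div m < r1" "\<not> j div n < r1" using m n by (simp_all add: div_less_iff_less_mult)
    then show ?thesis using X i j lhs 2 by (simp add: block_diag_def)
  next
    case 3
    then have "\<not> i div m < r1" "j div n < r1" using m n by (simp_all add: div_less_iff_less_mult)
    then show ?thesis using X i j lhs 3 by (simp add: block_diag_def)
  next
    case 4
    obtain i' j' where ij: "i = r1*m + i'" "j = r1*n + j'" using 4 by (metis add_diff_inverse)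
    then have "i' < r2*m" "j' < r2*n" using i j by simp_all
    then show ?thesis using X lhs 4 ij m n by (simp add: block_diag_def kron_id_index)
  qed
qed (use X in \<open>simp_all add: block_diag_def algebra_simps\<close>)

lemma relu_vec_append: "relu_vec (u @\<^sub>v v) = relu_vec u @\<^sub>v relu_vec v"
  unfolding relu_vec_def by (intro eq_vecI) auto

lemma append_vec_add_dim:
  "dim_vec v' = dim_vec v \<Longrightarrow> dim_vec w' = dim_vec w \<Longrightarrow> (v @\<^sub>v w) + (v' @\<^sub>v w') = (v + v') @\<^sub>v (w + w')"
  by (metis append_vec_add carrier_vec_dim_vec)

lemma dim_relu_vec [simp]: "dim_vec (relu_vec v) = dim_vec v"
  by (simp add: relu_vec_def)

lemma add_relu_vec_append:
  assumes "P = P1 @\<^sub>v P2" "Q = Q1 @\<^sub>v Q2" "dim_vec Q1 = dim_vec P1" "dim_vec Q2 = dim_vec P2"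
  shows "P + relu_vec Q = (P1 + relu_vec Q1) @\<^sub>v (P2 + relu_vec Q2)"
  using assms by (simp add: relu_vec_append append_vec_add_dim)

definition layer_par :: "layer \<Rightarrow> layer \<Rightarrow> layer" where
  "layer_par L1 L2 = Layer
     (lb0 L1 @\<^sub>v lb0 L2) (block_diag (lA0 L1) (lA0 L2)) (lr0 L1 + lr0 L2) (block_diag (lB0 L1) (lB0 L2))
     (lb1 L1 @\<^sub>v lb1 L2) (block_diag (lA1 L1) (lA1 L2)) (lr1 L1 + lr1 L2) (block_diag (lB1 L1) (lB1 L2))"

lemma lr_layer_par [simp]:
  "lr0 (layer_par L1 L2) = lr0 L1 + lr0 L2" "lr1 (layer_par L1 L2) = lr1 L1 + lr1 L2"
  by (simp_all add: layer_par_def)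

lemma layer_wf_par:
  assumes "layer_wf m n d1 e1 L1" "layer_wf m n d2 e2 L2"
    and "lr0 L1 * n = d1" "lr1 L1 * n = d1" "lr0 L2 * n = d2" "lr1 L2 * n = d2"
  shows "layer_wf m n (d1+d2) (e1+e2) (layer_par L1 L2)"
  using assms unfolding layer_wf_def layer_par_def
  by (auto intro!: block_diag_carrier simp: algebra_simps)

lemma affine_kron_par:
  assumes "b1 \<in> carrier_vec e1" "A1 \<in> carrier_mat e1 d1" "B1 \<in> carrier_mat e1 (r1*m)" "r1*n = d1"
    and "b2 \<in> carrier_vec e2" "A2 \<in> carrier_mat e2 d2" "B2 \<in> carrier_mat e2 (r2*m)" "r2*n = d2"
    and X: "X \<in> carrier_mat m n" and mn: "0 < m" "0 < n"
    and h: "h1 \<in> carrier_vec d1" "h2 \<in> carrier_vec d2"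
  shows "(b1 @\<^sub>v b2) + block_diag A1 A2 *\<^sub>v (h1 @\<^sub>v h2) + block_diag B1 B2 *\<^sub>v (kron_id (r1+r2) X *\<^sub>v (h1 @\<^sub>v h2))
    = (b1 + A1 *\<^sub>v h1 + B1 *\<^sub>v (kron_id r1 X *\<^sub>v h1)) @\<^sub>v (b2 + A2 *\<^sub>v h2 + B2 *\<^sub>v (kron_id r2 X *\<^sub>v h2))"
proof -
  have k: "kron_id r1 X \<in> carrier_mat (r1*m) d1" "kron_id r2 X \<in> carrier_mat (r2*m) d2"
    using kron_id_carrier[OF X] assms(4,8) by auto
  have "kron_id (r1+r2) X *\<^sub>v (h1 @\<^sub>v h2) = (kron_id r1 X *\<^sub>v h1) @\<^sub>v (kron_id r2 X *\<^sub>v h2)"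
    unfolding kron_id_add[OF X mn] using k h by (rule block_diag_mult_append)
  moreover have "block_diag A1 A2 *\<^sub>v (h1 @\<^sub>v h2) = (A1 *\<^sub>v h1) @\<^sub>v (A2 *\<^sub>v h2)"
    using assms(2,6) h by (rule block_diag_mult_append)
  moreover have "block_diag B1 B2 *\<^sub>v ((kron_id r1 X *\<^sub>v h1) @\<^sub>v (kron_id r2 X *\<^sub>v h2))
      = (B1 *\<^sub>v (kron_id r1 X *\<^sub>v h1)) @\<^sub>v (B2 *\<^sub>v (kron_id r2 X *\<^sub>v h2))"
    using assms(3,7) k h by (intro block_diag_mult_append mult_mat_vec_carrier) auto
  ultimately show ?thesis
    using assms(1-3,5-7) k h by (simp add: append_vec_add_dim)
qed

lemma layer_step_par:
  assumes L1: "layer_wf m n d1 e1 L1" and L2: "layer_wf m n d2 e2 L2"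
    and r: "lr0 L1 * n = d1" "lr1 L1 * n = d1" "lr0 L2 * n = d2" "lr1 L2 * n = d2"
    and X: "X \<in> carrier_mat m n" and mn: "0 < m" "0 < n"
    and h: "h1 \<in> carrier_vec d1" "h2 \<in> carrier_vec d2"
  shows "layer_step X (layer_par L1 L2) (h1 @\<^sub>v h2) = layer_step X L1 h1 @\<^sub>v layer_step X L2 h2"
  unfolding layer_step_def layer_par_def layer.sel
  using L1 L2 r h unfolding layer_wf_def
  by (intro add_relu_vec_append affine_kron_par[OF _ _ _ _ _ _ _ _ X mn h]) auto

lemma sync_net_par:
  assumes "sync_net m n ds1 Ls1" "sync_net m n ds2 Ls2" "length Ls1 = length Ls2"
  shows "sync_net m n (map2 (+) ds1 ds2) (map2 layer_par Ls1 Ls2)"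
  using assms
proof (induction Ls1 arbitrary: Ls2 ds1 ds2)
  case Nil
  then show ?case by (auto simp: sync_net_def length_Suc_conv)
next
  case (Cons L1 Ls1)
  obtain L2 Ls2' where Ls2: "Ls2 = L2 # Ls2'" using Cons.prems(3) by (cases Ls2) auto
  obtain a ds1' b ds2' where ds: "ds1 = a # ds1'" "ds2 = b # ds2'"
    using Cons.prems(1,2) Ls2 unfolding sync_net_def by (cases ds1; cases ds2) auto
  have "ds1' \<noteq> []" "ds2' \<noteq> []" using Cons.prems(1,2) ds Ls2 by (auto simp: sync_net_def)
  then have "hd (map2 (+) ds1' ds2') = hd ds1' + hd ds2'"
    by (cases ds1'; cases ds2') auto
  then show ?case
    using Cons Ls2 ds by (auto simp: sync_net_Cons distrib_right intro!: layer_wf_par)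
qed

lemma foldl_layer_step_par:
  assumes "sync_net m n ds1 Ls1" "sync_net m n ds2 Ls2" "length Ls1 = length Ls2"
    "h1 \<in> carrier_vec (hd ds1)" "h2 \<in> carrier_vec (hd ds2)"
    "X \<in> carrier_mat m n" "0 < m" "0 < n"
  shows "foldl (\<lambda>h L. layer_step X L h) (h1 @\<^sub>v h2) (map2 layer_par Ls1 Ls2) =
     foldl (\<lambda>h L. layer_step X L h) h1 Ls1 @\<^sub>v foldl (\<lambda>h L. layer_step X L h) h2 Ls2"
  using assms
proof (induction Ls1 arbitrary: Ls2 ds1 ds2 h1 h2)
  case Nil
  then show ?case by simp
next
  case (Cons L1 Ls1)
  obtain L2 Ls2' where Ls2: "Ls2 = L2 # Ls2'" using Cons.prems(3) by (cases Ls2) auto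
  obtain a ds1' b ds2' where ds: "ds1 = a # ds1'" "ds2 = b # ds2'"
    using Cons.prems(1,2) Ls2 unfolding sync_net_def by (cases ds1; cases ds2) auto
  have w1: "layer_wf m n a (hd ds1') L1" "lr0 L1 * n = a" "lr1 L1 * n = a" "sync_net m n ds1' Ls1"
    and w2: "layer_wf m n b (hd ds2') L2" "lr0 L2 * n = b" "lr1 L2 * n = b" "sync_net m n ds2' Ls2'"
    using Cons.prems(1,2) ds Ls2 by (simp_all add: sync_net_Cons)
  have "layer_step X (layer_par L1 L2) (h1 @\<^sub>v h2) = layer_step X L1 h1 @\<^sub>v layer_step X L2 h2"
    using Cons.prems(4,5) ds by (intro layer_step_par[OF w1(1) w2(1) w1(2,3) w2(2,3) Cons.prems(6-8)]) auto
  moreover have "layer_step X L1 h1 \<in> carrier_vec (hd ds1')" "layer_step X L2 h2 \<in> carrier_vec (hd ds2')"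
    using w1(1) w2(1) Cons.prems(6)
    by (auto simp: layer_step_def layer_wf_def relu_vec_def intro!: carrier_vecI)
  ultimately show ?case
    using Cons.IH[OF w1(4) w2(4)] Cons.prems(3,6-8) Ls2 by simp
qed

lemma sync_computes_append:
  assumes G1: "sync_computes m n len d1 G1" and G2: "sync_computes m n len d2 G2"
    and mn: "0 < m" "0 < n"
  shows "sync_computes m n len (d1+d2) (\<lambda>X. G1 X @\<^sub>v G2 X)"
proof -
  obtain ds1 Ls1 where net1: "sync_net m n ds1 Ls1" and len1: "length Ls1 = len" and hd1: "hd ds1 = 0"
    and last1: "last ds1 = d1" and ev1: "\<forall>X\<in>carrier_mat m n. net_eval ds1 Ls1 X = G1 X"
    using G1 unfolding sync_computes_def by blast
  obtain ds2 Ls2 where net2: "sync_net m n ds2 Ls2" and len2: "length Ls2 = len" and hd2: "hd ds2 = 0"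
    and last2: "last ds2 = d2" and ev2: "\<forall>X\<in>carrier_mat m n. net_eval ds2 Ls2 X = G2 X"
    using G2 unfolding sync_computes_def by blast
  have l: "length ds1 = Suc len" "length ds2 = Suc len"
    using net1 net2 len1 len2 by (auto simp: sync_net_def)
  let ?ds = "map2 (+) ds1 ds2"
  have "hd ?ds = 0" using l hd1 hd2 by (cases ds1; cases ds2) auto
  moreover have "last ?ds = d1 + d2"
  proof -
    have "ds1 \<noteq> []" "ds2 \<noteq> []" "?ds \<noteq> []" using l by auto
    then show ?thesis using l last1 last2 by (simp add: last_conv_nth)
  qed
  moreover have "net_eval ?ds (map2 layer_par Ls1 Ls2) X = G1 X @\<^sub>v G2 X" if "X \<in> carrier_mat m n" for X
  proof -
    have "(0\<^sub>v 0 :: real vec) = 0\<^sub>v 0 @\<^sub>v 0\<^sub>v 0" by auto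
    then show ?thesis
      using foldl_layer_step_par[OF net1 net2 _ _ _ that mn, of "0\<^sub>v 0" "0\<^sub>v 0"] ev1 ev2 that
        \<open>hd ?ds = 0\<close> hd1 hd2 len1 len2
      by (simp add: net_eval_def)
  qed
  ultimately show ?thesis
    unfolding sync_computes_def using sync_net_par[OF net1 net2] len1 len2
    by (intro exI[of _ ?ds] exI[of _ "map2 layer_par Ls1 Ls2"]) auto
qed

lemma sync_computable_append:
  assumes "sync_computable m n d1 G1" "sync_computable m n d2 G2" "0 < m" "0 < n"
  shows "sync_computable m n (d1+d2) (\<lambda>X. G1 X @\<^sub>v G2 X)"
proof -
  obtain l1 l2 where "sync_computes m n l1 d1 G1" "sync_computes m n l2 d2 G2"
    using assms(1,2) unfolding sync_computable_def by blast
  then have "sync_computes m n (max l1 l2) d1 G1" "sync_computes m n (max l1 l2) d2 G2"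
    by (simp_all add: sync_computes_mono)
  then show ?thesis unfolding sync_computable_def using sync_computes_append assms(3,4) by blast
qed


section \<open>From ISD functions to networks\<close>

definition single_vec :: "nat \<Rightarrow> nat \<Rightarrow> real \<Rightarrow> real vec" where
  "single_vec n b t = vec n (\<lambda>j. if j = b then t else 0)"

text \<open>A scalar function of vec X is carried by a state of width n holding it in one slot:
  width n is what the term I_1 \<otimes> X accepts, and allowing every slot b lets
  entry_mult_layer below read slot c and write X_(a,c) times its content into slot b.\<close>

definition net_computable :: "nat \<Rightarrow> nat \<Rightarrow> (real vec \<Rightarrow> real) \<Rightarrow> bool" where
  "net_computable m n g \<longleftrightarrow> (\<forall>b<n. sync_computable m n n (\<lambda>X. single_vec n b (g (vec_cm m n X))))"

lemma net_computable_cong: "net_computable m n f \<Longrightarrow> (\<And>x. f x = g x) \<Longrightarrow> net_computable m n g"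
  by (metis ext)

lemma sum_delta_mult: "c < (N::nat) \<Longrightarrow> (\<Sum>j<N. (if j = c then t else 0) * f j) = t * (f c :: real)"
  by (simp add: if_distrib[of "\<lambda>s. s * f _"] sum.delta cong: if_cong)

lemma sum_mult_delta: "c < (N::nat) \<Longrightarrow> (\<Sum>j<N. f j * (if j = c then t else 0)) = f c * (t :: real)"
  using sum_delta_mult[of c N t f] by (simp add: mult.commute)

definition lin_comb_mat :: "nat \<Rightarrow> real \<Rightarrow> real \<Rightarrow> real mat" where
  "lin_comb_mat n a1 a2 = mat n (n+n) (\<lambda>(i,j). (if j = i then a1 else 0) + (if j = i + n then a2 else 0))"

lemma lin_comb_mat_carrier: "lin_comb_mat n a1 a2 \<in> carrier_mat n (n+n)"
  unfolding lin_comb_mat_def by auto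

lemma dim_lin_comb_mat [simp]: "dim_row (lin_comb_mat n a1 a2) = n" "dim_col (lin_comb_mat n a1 a2) = n+n"
  unfolding lin_comb_mat_def by auto

lemma lin_comb_mat_mult_append:
  assumes u: "u \<in> carrier_vec n" and v: "v \<in> carrier_vec n" and i: "i < n"
  shows "(lin_comb_mat n a1 a2 *\<^sub>v (u @\<^sub>v v)) $ i = a1 * u $ i + a2 * v $ i"
proof -
  have "(lin_comb_mat n a1 a2 *\<^sub>v (u @\<^sub>v v)) $ i
      = (\<Sum>j<n+n. ((if j = i then a1 else 0) + (if j = i + n then a2 else 0)) * (u @\<^sub>v v) $ j)"
    using u v i lin_comb_mat_carrier
    by (subst mult_mat_vec_nth[of _ n "n+n"]) (auto simp: lin_comb_mat_def intro!: sum.cong)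
  also have "\<dots> = a1 * (u @\<^sub>v v) $ i + a2 * (u @\<^sub>v v) $ (i + n)"
    using i by (simp add: distrib_right sum.distrib sum_delta_mult)
  also have "\<dots> = a1 * u $ i + a2 * v $ i" using u v i by simp
  finally show ?thesis .
qed

definition lin_relu_layer :: "nat \<Rightarrow> nat \<Rightarrow> real \<Rightarrow> real \<Rightarrow> real \<Rightarrow> real \<Rightarrow> layer" where
  "lin_relu_layer m n a1 a2 b1 b2 = Layer
     (0\<^sub>v n) (lin_comb_mat n a1 a2) 2 (0\<^sub>m n (2*m)) (0\<^sub>v n) (lin_comb_mat n b1 b2) 2 (0\<^sub>m n (2*m))"

lemma layer_wf_lin_relu_layer: "layer_wf m n (n+n) n (lin_relu_layer m n a1 a2 b1 b2)"
  unfolding layer_wf_def lin_relu_layer_def using lin_comb_mat_carrier by auto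

lemma layer_step_lin_relu_layer:
  assumes X: "X \<in> carrier_mat m n" and u: "u \<in> carrier_vec n" and v: "v \<in> carrier_vec n"
  shows "layer_step X (lin_relu_layer m n a1 a2 b1 b2) (u @\<^sub>v v) =
    vec n (\<lambda>i. a1 * u $ i + a2 * v $ i + max 0 (b1 * u $ i + b2 * v $ i))"
proof -
  have "0\<^sub>m n (2*m) *\<^sub>v (kron_id 2 X *\<^sub>v (u @\<^sub>v v)) = 0\<^sub>v n"
    using X by (intro zero_mat_mult_vec) simp
  then show ?thesis
    unfolding layer_step_def lin_relu_layer_def layer.sel
    using u v lin_comb_mat_mult_append[OF u v] lin_comb_mat_carrier
    by (intro eq_vecI) (auto simp: relu_vec_def)
qed

lemma net_computable_lin_relu:
  assumes "net_computable m n g1" "net_computable m n g2" "0 < m" "0 < n"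
  shows "net_computable m n (\<lambda>x. a1 * g1 x + a2 * g2 x + max 0 (b1 * g1 x + b2 * g2 x))"
  unfolding net_computable_def
proof (intro allI impI)
  fix b assume "b < n"
  then have "sync_computable m n (n+n)
      (\<lambda>X. single_vec n b (g1 (vec_cm m n X)) @\<^sub>v single_vec n b (g2 (vec_cm m n X)))"
    using assms unfolding net_computable_def by (intro sync_computable_append) auto
  then have "sync_computable m n n (\<lambda>X. layer_step X (lin_relu_layer m n a1 a2 b1 b2)
      (single_vec n b (g1 (vec_cm m n X)) @\<^sub>v single_vec n b (g2 (vec_cm m n X))))"
    by (rule sync_computable_layer[OF _ layer_wf_lin_relu_layer]) (simp_all add: lin_relu_layer_def)
  then show "sync_computable m n n (\<lambda>X. single_vec n b (a1 * g1 (vec_cm m n X) + a2 * g2 (vec_cm m n X) +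
      max 0 (b1 * g1 (vec_cm m n X) + b2 * g2 (vec_cm m n X))))"
    by (rule sync_computable_cong)
      (subst layer_step_lin_relu_layer, auto simp: single_vec_def intro!: eq_vecI)
qed

definition entry_mult_layer :: "nat \<Rightarrow> nat \<Rightarrow> nat \<Rightarrow> nat \<Rightarrow> layer" where
  "entry_mult_layer m n a b = Layer (0\<^sub>v n) (0\<^sub>m n n) 1 (mat n m (\<lambda>(i,p). if i = b \<and> p = a then 1 else 0))
     (0\<^sub>v n) (0\<^sub>m n n) 1 (0\<^sub>m n m)"

lemma layer_wf_entry_mult_layer: "layer_wf m n n n (entry_mult_layer m n a b)"
  unfolding layer_wf_def entry_mult_layer_def by auto

lemma layer_step_entry_mult_layer:
  assumes X: "X \<in> carrier_mat m n" and a: "a < m" and b: "b < n" and c: "c < n"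
  shows "layer_step X (entry_mult_layer m n a b) (single_vec n c t) = single_vec n b (X $$ (a,c) * t)"
proof -
  let ?h = "single_vec n c t"
  let ?w = "kron_id 1 X *\<^sub>v ?h"
  let ?E = "mat n m (\<lambda>(i,p). if i = b \<and> p = a then 1 else (0::real))"
  have h: "?h \<in> carrier_vec n" unfolding single_vec_def by auto
  have K: "kron_id 1 X \<in> carrier_mat m n" using kron_id_carrier[OF X, of 1] by simp
  have w: "dim_vec ?w = m" using X by simp
  have "?w $ a = (\<Sum>j<n. X $$ (a,j) * (if j = c then t else 0))"
    using K h a X by (subst mult_mat_vec_nth[OF K]) (auto simp: kron_id_index single_vec_def intro!: sum.cong)
  then have wa: "?w $ a = X $$ (a,c) * t" using c by (simp add: sum_mult_delta)
  have "(?E *\<^sub>v ?w) $ i = (if i = b then ?w $ a else 0)" if i: "i < n" for i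
  proof -
    have "(?E *\<^sub>v ?w) $ i = (\<Sum>p<m. (if p = a then (if i = b then 1 else 0) else 0) * ?w $ p)"
      using w i by (subst mult_mat_vec_nth[of _ n m]) (auto intro!: sum.cong)
    also have "\<dots> = (if i = b then ?w $ a else 0)" using a by (simp add: sum_delta_mult)
    finally show ?thesis .
  qed
  moreover have "0\<^sub>m n m *\<^sub>v ?w = 0\<^sub>v n" "0\<^sub>m n n *\<^sub>v ?h = 0\<^sub>v n"
    using w h by (simp_all add: zero_mat_mult_vec)
  ultimately show ?thesis
    unfolding layer_step_def entry_mult_layer_def layer.sel
    using wa by (intro eq_vecI) (auto simp: relu_vec_def single_vec_def)
qed

lemma net_computable_entry_mult:
  assumes "net_computable m n g" and a: "a < m" and c: "c < n"
  shows "net_computable m n (\<lambda>x. x $ (c*m + a) * g x)"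
  unfolding net_computable_def
proof (intro allI impI)
  fix b assume b: "b < n"
  have "sync_computable m n n (\<lambda>X. single_vec n c (g (vec_cm m n X)))"
    using assms c unfolding net_computable_def by auto
  then have "sync_computable m n n (\<lambda>X. layer_step X (entry_mult_layer m n a b) (single_vec n c (g (vec_cm m n X))))"
    by (rule sync_computable_layer[OF _ layer_wf_entry_mult_layer]) (simp_all add: entry_mult_layer_def)
  then show "sync_computable m n n (\<lambda>X. single_vec n b (vec_cm m n X $ (c*m + a) * g (vec_cm m n X)))"
    by (rule sync_computable_cong) (simp add: layer_step_entry_mult_layer a b c vec_cm_index)
qed

lemma net_computable_const: "net_computable m n (\<lambda>x. c)"
  unfolding net_computable_def by (auto intro!: sync_computable_const simp: single_vec_def)

lemma net_computable_add:
  assumes "net_computable m n f" "net_computable m n g" "0 < m" "0 < n"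
  shows "net_computable m n (\<lambda>x. f x + g x)"
  using net_computable_lin_relu[OF assms, of 1 1 0 0] by (rule net_computable_cong) simp

lemma net_computable_uminus:
  assumes "net_computable m n f" "0 < m" "0 < n"
  shows "net_computable m n (\<lambda>x. - f x)"
  using net_computable_lin_relu[OF assms(1,1,2,3), of "-1" 0 0 0] by (rule net_computable_cong) simp

lemma net_computable_max:
  assumes "net_computable m n f" "net_computable m n g" "0 < m" "0 < n"
  shows "net_computable m n (\<lambda>x. max (f x) (g x))"
  using net_computable_lin_relu[OF assms, of 0 1 1 "-1"] by (rule net_computable_cong) (simp add: max_def)

lemma net_computable_min:
  assumes "net_computable m n f" "net_computable m n g" "0 < m" "0 < n"
  shows "net_computable m n (\<lambda>x. min (f x) (g x))"
proof -
  have "net_computable m n (\<lambda>x. - max (- f x) (- g x))"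
    using assms by (intro net_computable_uminus net_computable_max) auto
  then show ?thesis by (rule net_computable_cong) (simp add: max_def min_def)
qed

text \<open>Networks multiply by one entry of X at a time, so polynomials are regenerated by
  this Horner-type grammar.\<close>

inductive coord_poly :: "nat \<Rightarrow> (real vec \<Rightarrow> real) \<Rightarrow> bool" for N :: nat where
  coord_poly_const: "coord_poly N (\<lambda>x. c)"
| coord_poly_add: "coord_poly N f \<Longrightarrow> coord_poly N g \<Longrightarrow> coord_poly N (\<lambda>x. f x + g x)"
| coord_poly_coord_mult: "i < N \<Longrightarrow> coord_poly N g \<Longrightarrow> coord_poly N (\<lambda>x. x $ i * g x)"

lemma coord_poly_scale: "coord_poly N g \<Longrightarrow> coord_poly N (\<lambda>x. c * g x)"
proof (induction rule: coord_poly.induct)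
  case (coord_poly_const c')
  then show ?case using coord_poly.coord_poly_const by simp
next
  case (coord_poly_add f g)
  then show ?case using coord_poly.coord_poly_add by (simp add: distrib_left)
next
  case (coord_poly_coord_mult i g)
  then have "coord_poly N (\<lambda>x. x $ i * (c * g x))" by (intro coord_poly.coord_poly_coord_mult)
  then show ?case by (simp add: mult.left_commute)
qed

lemma coord_poly_mult: "coord_poly N p \<Longrightarrow> coord_poly N q \<Longrightarrow> coord_poly N (\<lambda>x. p x * q x)"
proof (induction rule: coord_poly.induct)
  case (coord_poly_const c)
  then show ?case by (rule coord_poly_scale)
next
  case (coord_poly_add f g)
  then show ?case using coord_poly.coord_poly_add by (simp add: distrib_right)
next
  case (coord_poly_coord_mult i g)
  then show ?case using coord_poly.coord_poly_coord_mult by (simp add: mult.assoc)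
qed

lemma poly_fun_imp_coord_poly: "poly_fun N f \<Longrightarrow> coord_poly N f"
proof (induction rule: poly_fun.induct)
  case (pf_coord i)
  then show ?case using coord_poly_coord_mult[OF _ coord_poly_const, of i N 1] by simp
qed (auto intro: coord_poly.intros coord_poly_mult)

lemma net_computable_coord_poly: "coord_poly (m*n) g \<Longrightarrow> 0 < m \<Longrightarrow> 0 < n \<Longrightarrow> net_computable m n g"
proof (induction rule: coord_poly.induct)
  case (coord_poly_const c)
  show ?case by (rule net_computable_const)
next
  case (coord_poly_add f g)
  then show ?case by (intro net_computable_add) auto
next
  case (coord_poly_coord_mult i g)
  then have "i mod m < m" "i div m < n" by (simp_all add: less_mult_imp_div_less mult.commute)
  then have "net_computable m n (\<lambda>x. x $ ((i div m)*m + i mod m) * g x)"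
    using coord_poly_coord_mult by (intro net_computable_entry_mult) auto
  then show ?case by simp
qed

lemma net_computable_isd_fun: "isd_fun (m*n) f \<Longrightarrow> 0 < m \<Longrightarrow> 0 < n \<Longrightarrow> net_computable m n f"
  by (induction rule: isd_fun.induct)
    (auto intro: net_computable_coord_poly poly_fun_imp_coord_poly net_computable_min net_computable_max)

text \<open>To output k scalar functions, their width-n states are stacked and slot 0 of each
  block is then selected.\<close>

definition stack_vec :: "nat \<Rightarrow> (nat \<Rightarrow> real vec \<Rightarrow> real) \<Rightarrow> nat \<Rightarrow> real vec \<Rightarrow> real vec" where
  "stack_vec n fs j v = vec (j*n) (\<lambda>p. if p mod n = 0 then fs (p div n) v else 0)"

lemma stack_vec_Suc: "0 < n \<Longrightarrow> stack_vec n fs j v @\<^sub>v single_vec n 0 (fs j v) = stack_vec n fs (Suc j) v"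
proof (rule eq_vecI)
  assume n: "0 < n"
  fix p assume "p < dim_vec (stack_vec n fs (Suc j) v)"
  then have p: "p < j*n + n" by (simp add: stack_vec_def)
  show "(stack_vec n fs j v @\<^sub>v single_vec n 0 (fs j v)) $ p = stack_vec n fs (Suc j) v $ p"
  proof (cases "p < j*n")
    case True
    then show ?thesis using p by (simp add: stack_vec_def single_vec_def)
  next
    case False
    then obtain q where q: "p = j*n + q" by (metis le_add_diff_inverse not_less)
    with p have "q < n" by simp
    then have "p mod n = q" "p div n = j" using q by auto
    then show ?thesis using False q \<open>q < n\<close> by (simp add: stack_vec_def single_vec_def)
  qed
qed (simp add: stack_vec_def single_vec_def)

lemma sync_computable_stack_vec:
  assumes fs: "\<And>i. i < k \<Longrightarrow> net_computable m n (fs i)" and mn: "0 < m" "0 < n" and "j \<le> k"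
  shows "sync_computable m n (j*n) (\<lambda>X. stack_vec n fs j (vec_cm m n X))"
  using \<open>j \<le> k\<close>
proof (induction j)
  case 0
  have "sync_computable m n 0 (\<lambda>X. vec 0 (\<lambda>p. 0))" by (rule sync_computable_const) auto
  then show ?case by (simp, rule sync_computable_cong) (auto simp: stack_vec_def)
next
  case (Suc j)
  then have "sync_computable m n (j*n + n)
      (\<lambda>X. stack_vec n fs j (vec_cm m n X) @\<^sub>v single_vec n 0 (fs j (vec_cm m n X)))"
    using fs[of j] mn unfolding net_computable_def by (intro sync_computable_append) auto
  then have "sync_computable m n (j*n + n) (\<lambda>X. stack_vec n fs (Suc j) (vec_cm m n X))"
    by (rule sync_computable_cong) (simp add: stack_vec_Suc mn)
  then show ?case by (simp add: add.commute)
qed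

definition select_layer :: "nat \<Rightarrow> nat \<Rightarrow> nat \<Rightarrow> layer" where
  "select_layer m n k = Layer (0\<^sub>v k) (mat k (k*n) (\<lambda>(i,p). if p = i*n then 1 else 0)) k (0\<^sub>m k (k*m))
     (0\<^sub>v k) (0\<^sub>m k (k*n)) k (0\<^sub>m k (k*m))"

lemma layer_wf_select_layer: "layer_wf m n (k*n) k (select_layer m n k)"
  unfolding layer_wf_def select_layer_def by auto

lemma layer_step_select_layer:
  assumes X: "X \<in> carrier_mat m n" and n: "0 < n"
  shows "layer_step X (select_layer m n k) (stack_vec n fs k v) = vec k (\<lambda>i. fs i v)"
proof -
  let ?h = "stack_vec n fs k v"
  let ?S = "mat k (k*n) (\<lambda>(i,p). if p = i*n then (1::real) else 0)"
  have h: "dim_vec ?h = k*n" unfolding stack_vec_def by auto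
  have "(?S *\<^sub>v ?h) $ i = fs i v" if i: "i < k" for i
  proof -
    have ik: "i*n < k*n" using i n by simp
    have "(?S *\<^sub>v ?h) $ i = (\<Sum>p<k*n. (if p = i*n then 1 else 0) * ?h $ p)"
      using h i by (subst mult_mat_vec_nth[of _ k "k*n"]) (auto intro!: sum.cong)
    also have "\<dots> = fs i v" using ik n by (simp add: sum_delta_mult stack_vec_def)
    finally show ?thesis .
  qed
  moreover have "0\<^sub>m k (k*m) *\<^sub>v (kron_id k X *\<^sub>v ?h) = 0\<^sub>v k" "0\<^sub>m k (k*n) *\<^sub>v ?h = 0\<^sub>v k"
    using X h by (simp_all add: zero_mat_mult_vec)
  ultimately show ?thesis
    unfolding layer_step_def select_layer_def layer.sel by (intro eq_vecI) (auto simp: relu_vec_def)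
qed

lemma ISD_eq_comp_unvec_cm:
  assumes f: "f \<in> ISD (m*n) k" and G: "\<And>x. x \<in> carrier_vec (m*n) \<Longrightarrow> G (unvec_cm m n x) = f x"
  shows "f = restrict (restrict G (carrier_mat m n) \<circ> unvec_cm m n) (carrier_vec (m*n))"
proof
  fix x
  show "f x = restrict (restrict G (carrier_mat m n) \<circ> unvec_cm m n) (carrier_vec (m*n)) x"
    using f G unvec_cm_carrier by (cases "x \<in> carrier_vec (m*n)") (auto simp: ISD_def extensional_def)
qed

lemma ISD_eq_MRNN_comp_unvec_cm:
  assumes f: "f \<in> ISD (m * n) k"
  shows "\<exists>N \<in> MRNN m n k. f = restrict (N \<circ> unvec_cm m n) (carrier_vec (m * n))"
proof (cases "m = 0 \<or> n = 0")
  case True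
  then have "x = 0\<^sub>v 0" if "x \<in> carrier_vec (m*n)" for x using that by (intro eq_vecI) auto
  moreover have "f (0\<^sub>v 0) \<in> carrier_vec k" using f True unfolding ISD_def by auto
  ultimately show ?thesis
    using ISD_eq_comp_unvec_cm[OF f, of "\<lambda>X. f (0\<^sub>v 0)"] MRNN_const by blast
next
  case False
  then have mn: "0 < m" "0 < n" by auto
  have "\<forall>i. \<exists>g. i < k \<longrightarrow> isd_fun (m*n) g \<and> (\<forall>x\<in>carrier_vec (m*n). f x $ i = g x)"
    using f unfolding ISD_def by auto
  then obtain fs where fs: "\<And>i. i < k \<Longrightarrow> isd_fun (m*n) (fs i)"
    and f_eq: "\<And>i x. i < k \<Longrightarrow> x \<in> carrier_vec (m*n) \<Longrightarrow> f x $ i = fs i x"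
    by metis
  let ?G = "\<lambda>X. vec k (\<lambda>i. fs i (vec_cm m n X))"
  have "sync_computable m n (k*n) (\<lambda>X. stack_vec n fs k (vec_cm m n X))"
    using net_computable_isd_fun[OF fs mn] mn by (intro sync_computable_stack_vec[where k = k]) auto
  then have "sync_computable m n k (\<lambda>X. layer_step X (select_layer m n k) (stack_vec n fs k (vec_cm m n X)))"
    by (rule sync_computable_layer[OF _ layer_wf_select_layer]) (simp_all add: select_layer_def)
  then have "sync_computable m n k ?G"
    by (rule sync_computable_cong) (simp add: layer_step_select_layer mn)
  moreover have "?G (unvec_cm m n x) = f x" if "x \<in> carrier_vec (m*n)" for x
    using that f f_eq unfolding ISD_def by (auto simp: vec_cm_unvec_cm intro!: eq_vecI)
  ultimately show ?thesis
    using ISD_eq_comp_unvec_cm[OF f, of ?G] sync_computable_MRNN[of m n k ?G] by blast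
qed


section \<open>The ring isomorphism\<close>

lemma restrict_vec_eqI:
  assumes "F \<in> extensional D" "\<And>x. x \<in> D \<Longrightarrow> dim_vec (F x) = k"
    and "\<And>x i. x \<in> D \<Longrightarrow> i < k \<Longrightarrow> g x i = F x $ i"
  shows "restrict (\<lambda>x. vec k (g x)) D = F"
proof
  fix x
  show "restrict (\<lambda>x. vec k (g x)) D x = F x"
    using assms by (cases "x \<in> D") (auto intro!: eq_vecI simp: extensional_def)
qed

lemma fun_ring_ring:
  assumes S: "\<And>F. F \<in> S \<Longrightarrow> F \<in> extensional D \<and> (\<forall>x\<in>D. dim_vec (F x) = k)"
    and zero: "restrict (\<lambda>x. vec k (\<lambda>i. 0)) D \<in> S"
    and one: "restrict (\<lambda>x. vec k (\<lambda>i. 1)) D \<in> S"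
    and add: "\<And>F G. F \<in> S \<Longrightarrow> G \<in> S \<Longrightarrow> restrict (\<lambda>x. vec k (\<lambda>i. F x $ i + G x $ i)) D \<in> S"
    and mult: "\<And>F G. F \<in> S \<Longrightarrow> G \<in> S \<Longrightarrow> restrict (\<lambda>x. vec k (\<lambda>i. F x $ i * G x $ i)) D \<in> S"
    and neg: "\<And>F. F \<in> S \<Longrightarrow> restrict (\<lambda>x. vec k (\<lambda>i. - F x $ i)) D \<in> S"
  shows "ring (fun_ring D k S)"
proof (rule ringI)
  let ?R = "fun_ring D k S"
  have carrier: "carrier ?R = S" by (simp add: fun_ring_def)
  show "abelian_group ?R"
  proof (rule abelian_groupI, unfold carrier)
    fix x y z assume xyz: "x \<in> S" "y \<in> S" "z \<in> S"
    show "x \<oplus>\<^bsub>?R\<^esub> y \<in> S" using add[OF xyz(1,2)] by (simp add: fun_ring_def)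
    show "x \<oplus>\<^bsub>?R\<^esub> y \<oplus>\<^bsub>?R\<^esub> z = x \<oplus>\<^bsub>?R\<^esub> (y \<oplus>\<^bsub>?R\<^esub> z)"
      by (simp add: fun_ring_def, intro restrict_ext eq_vecI) (auto simp: add.assoc)
    show "x \<oplus>\<^bsub>?R\<^esub> y = y \<oplus>\<^bsub>?R\<^esub> x"
      by (simp add: fun_ring_def, intro restrict_ext eq_vecI) (auto simp: add.commute)
    show "\<zero>\<^bsub>?R\<^esub> \<oplus>\<^bsub>?R\<^esub> x = x"
      using S[OF xyz(1)] by (simp add: fun_ring_def, intro restrict_vec_eqI) auto
    show "\<exists>y\<in>S. y \<oplus>\<^bsub>?R\<^esub> x = \<zero>\<^bsub>?R\<^esub>"
      using neg[OF xyz(1)] S[OF xyz(1)]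
      by (intro bexI[of _ "restrict (\<lambda>v. vec k (\<lambda>i. - x v $ i)) D"])
        (simp_all add: fun_ring_def, intro restrict_ext eq_vecI, auto)
  qed (use zero in \<open>simp add: fun_ring_def\<close>)
  show "monoid ?R"
  proof (rule monoidI, unfold carrier)
    fix x y z assume xyz: "x \<in> S" "y \<in> S" "z \<in> S"
    show "x \<otimes>\<^bsub>?R\<^esub> y \<in> S" using mult[OF xyz(1,2)] by (simp add: fun_ring_def)
    show "x \<otimes>\<^bsub>?R\<^esub> y \<otimes>\<^bsub>?R\<^esub> z = x \<otimes>\<^bsub>?R\<^esub> (y \<otimes>\<^bsub>?R\<^esub> z)"
      by (simp add: fun_ring_def, intro restrict_ext eq_vecI) (auto simp: mult.assoc)
    show "\<one>\<^bsub>?R\<^esub> \<otimes>\<^bsub>?R\<^esub> x = x" "x \<otimes>\<^bsub>?R\<^esub> \<one>\<^bsub>?R\<^esub> = x"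
      using S[OF xyz(1)] by (simp_all add: fun_ring_def) (intro restrict_vec_eqI; auto)+
  qed (use one in \<open>simp add: fun_ring_def\<close>)
  fix x y z
  show "(x \<oplus>\<^bsub>?R\<^esub> y) \<otimes>\<^bsub>?R\<^esub> z = x \<otimes>\<^bsub>?R\<^esub> z \<oplus>\<^bsub>?R\<^esub> y \<otimes>\<^bsub>?R\<^esub> z"
    by (simp add: fun_ring_def, intro restrict_ext eq_vecI) (auto simp: distrib_right)
  show "z \<otimes>\<^bsub>?R\<^esub> (x \<oplus>\<^bsub>?R\<^esub> y) = z \<otimes>\<^bsub>?R\<^esub> x \<oplus>\<^bsub>?R\<^esub> z \<otimes>\<^bsub>?R\<^esub> y"
    by (simp add: fun_ring_def, intro restrict_ext eq_vecI) (auto simp: distrib_left)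
qed

lemma ISD_pointwise:
  assumes F: "F \<in> ISD N k" and G: "G \<in> ISD N k"
    and h: "\<And>f g. isd_fun N f \<Longrightarrow> isd_fun N g \<Longrightarrow> isd_fun N (\<lambda>x. h (f x) (g x))"
  shows "restrict (\<lambda>x. vec k (\<lambda>i. h (F x $ i) (G x $ i))) (carrier_vec N) \<in> ISD N k"
  unfolding ISD_def
proof (intro CollectI conjI allI impI ballI)
  fix i assume i: "i < k"
  obtain f where f: "isd_fun N f" "\<forall>x\<in>carrier_vec N. F x $ i = f x" using F i unfolding ISD_def by blast
  obtain g where g: "isd_fun N g" "\<forall>x\<in>carrier_vec N. G x $ i = g x" using G i unfolding ISD_def by blast
  show "\<exists>f. isd_fun N f \<and> (\<forall>x\<in>carrier_vec N.
      restrict (\<lambda>x. vec k (\<lambda>i. h (F x $ i) (G x $ i))) (carrier_vec N) x $ i = f x)"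
    using h[OF f(1) g(1)] f(2) g(2) i by (intro exI[of _ "\<lambda>x. h (f x) (g x)"]) auto
qed auto

lemma ISD_const_vec: "restrict (\<lambda>x. vec k (\<lambda>i. c)) (carrier_vec N) \<in> ISD N k"
  unfolding ISD_def using isd_fun_const by auto

lemma ring_ISD_ring: "ring (ISD_ring N k)"
  unfolding ISD_ring_def
proof (rule fun_ring_ring)
  fix F G assume F: "F \<in> ISD N k" and G: "G \<in> ISD N k"
  show "restrict (\<lambda>x. vec k (\<lambda>i. F x $ i + G x $ i)) (carrier_vec N) \<in> ISD N k"
    using F G isd_fun_add by (rule ISD_pointwise)
  show "restrict (\<lambda>x. vec k (\<lambda>i. F x $ i * G x $ i)) (carrier_vec N) \<in> ISD N k"
    using F G isd_fun_mult by (rule ISD_pointwise)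
  show "restrict (\<lambda>x. vec k (\<lambda>i. - F x $ i)) (carrier_vec N) \<in> ISD N k"
    using ISD_pointwise[OF F F, of "\<lambda>a b. - a"] isd_fun_uminus by simp
  show "F \<in> extensional (carrier_vec N) \<and> (\<forall>x\<in>carrier_vec N. dim_vec (F x) = k)"
    using F unfolding ISD_def by auto
qed (simp_all add: ISD_const_vec)

definition comp_unvec :: "nat \<Rightarrow> nat \<Rightarrow> (real mat \<Rightarrow> real vec) \<Rightarrow> real vec \<Rightarrow> real vec" where
  "comp_unvec m n N = restrict (N \<circ> unvec_cm m n) (carrier_vec (m * n))"

definition comp_vec :: "nat \<Rightarrow> nat \<Rightarrow> (real vec \<Rightarrow> real vec) \<Rightarrow> real mat \<Rightarrow> real vec" where
  "comp_vec m n f = restrict (f \<circ> vec_cm m n) (carrier_mat m n)"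

lemma comp_vec_comp_unvec:
  assumes "N \<in> MRNN m n k"
  shows "comp_vec m n (comp_unvec m n N) = N"
proof -
  have "comp_vec m n (comp_unvec m n N) = restrict N (carrier_mat m n)"
    unfolding comp_vec_def comp_unvec_def by (intro restrict_ext) (simp add: vec_cm_carrier unvec_cm_vec_cm)
  also have "\<dots> = N" using assms by (intro extensional_restrict) (auto simp: MRNN_def)
  finally show ?thesis .
qed

lemma comp_unvec_comp_vec:
  assumes "f \<in> ISD (m*n) k"
  shows "comp_unvec m n (comp_vec m n f) = f"
proof -
  have "comp_unvec m n (comp_vec m n f) = restrict f (carrier_vec (m*n))"
    unfolding comp_vec_def comp_unvec_def by (intro restrict_ext) (simp add: unvec_cm_carrier vec_cm_unvec_cm)
  also have "\<dots> = f" using assms by (intro extensional_restrict) (simp add: ISD_def)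
  finally show ?thesis .
qed

lemma comp_vec_ISD:
  assumes "f \<in> ISD (m*n) k"
  shows "comp_vec m n f \<in> MRNN m n k"
proof -
  obtain N where "N \<in> MRNN m n k" "f = comp_unvec m n N"
    using ISD_eq_MRNN_comp_unvec_cm[OF assms] unfolding comp_unvec_def by blast
  then show ?thesis by (simp add: comp_vec_comp_unvec)
qed

lemma comp_unvec_MRNN:
  assumes "N \<in> MRNN m n k"
  shows "comp_unvec m n N \<in> ISD (m*n) k"
proof -
  obtain f where "f \<in> ISD (m*n) k" "N = comp_vec m n f"
    using MRNN_eq_ISD_comp_vec_cm[OF assms] unfolding comp_vec_def by blast
  then show ?thesis by (simp add: comp_unvec_comp_vec)
qed

lemma comp_vec_pointwise:
  "comp_vec m n (restrict (\<lambda>x. vec k (\<lambda>i. h (F x $ i) (G x $ i))) (carrier_vec (m*n))) =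
   restrict (\<lambda>X. vec k (\<lambda>i. h (comp_vec m n F X $ i) (comp_vec m n G X $ i))) (carrier_mat m n)"
  unfolding comp_vec_def by (intro restrict_ext) (simp add: vec_cm_carrier)

lemma comp_unvec_pointwise:
  "comp_unvec m n (restrict (\<lambda>X. vec k (\<lambda>i. h (F X $ i) (G X $ i))) (carrier_mat m n)) =
   restrict (\<lambda>x. vec k (\<lambda>i. h (comp_unvec m n F x $ i) (comp_unvec m n G x $ i))) (carrier_vec (m*n))"
  unfolding comp_unvec_def by (intro restrict_ext) (simp add: unvec_cm_carrier)

lemma comp_unvec_const:
  "comp_unvec m n (restrict (\<lambda>X. c) (carrier_mat m n)) = restrict (\<lambda>x. c) (carrier_vec (m*n))"
  unfolding comp_unvec_def by (intro restrict_ext) (simp add: unvec_cm_carrier)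

lemma MRNN_pointwise:
  assumes N1: "N1 \<in> MRNN m n k" and N2: "N2 \<in> MRNN m n k"
    and h: "\<And>f g. isd_fun (m*n) f \<Longrightarrow> isd_fun (m*n) g \<Longrightarrow> isd_fun (m*n) (\<lambda>x. h (f x) (g x))"
  shows "restrict (\<lambda>X. vec k (\<lambda>i. h (N1 X $ i) (N2 X $ i))) (carrier_mat m n) \<in> MRNN m n k"
proof -
  have "comp_vec m n (restrict (\<lambda>x. vec k (\<lambda>i. h (comp_unvec m n N1 x $ i) (comp_unvec m n N2 x $ i)))
      (carrier_vec (m*n))) \<in> MRNN m n k"
    using comp_unvec_MRNN[OF N1] comp_unvec_MRNN[OF N2] h by (intro comp_vec_ISD ISD_pointwise)
  then show ?thesis unfolding comp_vec_pointwise comp_vec_comp_unvec[OF N1] comp_vec_comp_unvec[OF N2] .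
qed

lemma ring_MRNN_ring: "ring (MRNN_ring m n k)"
  unfolding MRNN_ring_def
proof (rule fun_ring_ring)
  fix F G assume F: "F \<in> MRNN m n k" and G: "G \<in> MRNN m n k"
  show "restrict (\<lambda>x. vec k (\<lambda>i. F x $ i + G x $ i)) (carrier_mat m n) \<in> MRNN m n k"
    using F G isd_fun_add by (rule MRNN_pointwise)
  show "restrict (\<lambda>x. vec k (\<lambda>i. F x $ i * G x $ i)) (carrier_mat m n) \<in> MRNN m n k"
    using F G isd_fun_mult by (rule MRNN_pointwise)
  show "restrict (\<lambda>x. vec k (\<lambda>i. - F x $ i)) (carrier_mat m n) \<in> MRNN m n k"
    using MRNN_pointwise[OF F F, of "\<lambda>a b. - a"] isd_fun_uminus by simp
  obtain f where "f \<in> ISD (m*n) k" "F = restrict (f \<circ> vec_cm m n) (carrier_mat m n)"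
    using MRNN_eq_ISD_comp_vec_cm[OF F] by blast
  then show "F \<in> extensional (carrier_mat m n) \<and> (\<forall>X\<in>carrier_mat m n. dim_vec (F X) = k)"
    using vec_cm_carrier unfolding ISD_def by auto
qed (auto intro: MRNN_const)

lemma comp_unvec_ring_iso: "comp_unvec m n \<in> ring_iso (MRNN_ring m n k) (ISD_ring (m * n) k)"
proof -
  have carrier: "carrier (MRNN_ring m n k) = MRNN m n k" "carrier (ISD_ring (m*n) k) = ISD (m*n) k"
    unfolding MRNN_ring_def ISD_ring_def fun_ring_def by simp_all
  have "comp_unvec m n \<in> ring_hom (MRNN_ring m n k) (ISD_ring (m * n) k)"
    by (rule ring_hom_memI)
      (simp_all add: carrier comp_unvec_MRNN MRNN_ring_def ISD_ring_def fun_ring_def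
        comp_unvec_pointwise comp_unvec_const)
  moreover have "bij_betw (comp_unvec m n) (MRNN m n k) (ISD (m*n) k)"
    by (rule bij_betwI[where g = "comp_vec m n"])
      (auto simp: comp_unvec_MRNN comp_vec_ISD comp_vec_comp_unvec comp_unvec_comp_vec)
  ultimately show ?thesis unfolding ring_iso_def carrier by blast
qed

theorem mainTheorem8:
  fixes m n k :: nat
  shows "(\<forall>f \<in> ISD (m * n) k. \<exists>N \<in> MRNN m n k.
            f = restrict (N \<circ> unvec_cm m n) (carrier_vec (m * n)))
       \<and> (\<forall>N \<in> MRNN m n k. \<exists>f \<in> ISD (m * n) k.
            N = restrict (f \<circ> vec_cm m n) (carrier_mat m n))
       \<and> ring (MRNN_ring m n k) \<and> ring (ISD_ring (m * n) k)
       \<and> (\<lambda>N. restrict (N \<circ> unvec_cm m n) (carrier_vec (m * n)))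
            \<in> ring_iso (MRNN_ring m n k) (ISD_ring (m * n) k)"
  by (intro conjI ballI ISD_eq_MRNN_comp_unvec_cm MRNN_eq_ISD_comp_vec_cm ring_MRNN_ring ring_ISD_ring
      comp_unvec_ring_iso[unfolded comp_unvec_def[abs_def]])

end
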